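(* Let $r,K,\mu$ satisfy Assumption 1. There exists a unique $(w,m)\in(0,1)\times(0,K)$ such that $f_w(w,m)=f_m(w,m)=0$.
   Context: Assumption 1: $r\in(1,\infty)$, $\mu\in\left(0,\min\left(\frac r2,1-\frac1r,1-K,K\right)\right)$, $K\in\left(0,\min\left(1,\frac{r}{r-1}\left(1-\frac{\mu}{1-\mu}\right)\right)\right)$. $f_w(w,m):=w(1-(w+m))+\mu(m-w)$, $f_m(w,m):=rm\left(1-\frac{w+m}{K}\right)+\mu(w-m)$. *)

theory Defs
  imports Complex_Main
begin

definition f_w :: "real \<Rightarrow> real \<Rightarrow> real \<Rightarrow> real" where
  "f_w \<mu> w m = w * (1 - (w + m)) + \<mu> * (m - w)"

definition f_m :: "real \<Rightarrow> real \<Rightarrow> real \<Rightarrow> real \<Rightarrow> real \<Rightarrow> real" where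
  "f_m r K \<mu> w m = r * m * (1 - (w + m) / K) + \<mu> * (w - m)"

definition assumption1 :: "real \<Rightarrow> real \<Rightarrow> real \<Rightarrow> bool" where
  "assumption1 r K \<mu> \<longleftrightarrow>
     1 < r \<and>
     0 < \<mu> \<and> \<mu> < min (min (r / 2) (1 - 1 / r)) (min (1 - K) K) \<and>
     0 < K \<and> K < min 1 ((r / (r - 1)) * (1 - \<mu> / (1 - \<mu>)))"

end

theory Submission
  imports Defs "HOL-Library.Quadratic_Discriminant"
begin

text \<open>Writing \<open>m = t w\<close>, the equation \<open>f_w = 0\<close> says \<open>w + m = 1 + \<mu> (t - 1)\<close>, and substituting this
  into \<open>f_m = 0\<close> leaves a quadratic equation in the ratio \<open>t\<close> alone, with positive leading
  coefficient and negative constant term; so it has exactly one positive root. Conversely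
  every positive root determines \<open>w\<close> and \<open>m\<close>, and the bounds \<open>\<mu> < 1\<close>, \<open>\<mu> \<le> r\<close> put them into the
  required box.\<close>

lemma quadratic_unique_pos_root:
  fixes a b c :: real
  assumes "a > 0" "c < 0"
  shows "\<exists>!t. t > 0 \<and> a * t\<^sup>2 + b * t + c = 0"
proof -
  define D where "D = discrim a b c"
  have "4 * a * c < 0"
    using assms by (simp add: mult_pos_neg)
  then have "b\<^sup>2 < D"
    by (simp add: D_def discrim_def)
  then have "\<bar>b\<bar> < sqrt D"
    by (intro real_less_rsqrt) simp
  then have pos: "(-b + sqrt D) / (2 * a) > 0" and neg: "(-b - sqrt D) / (2 * a) < 0"
    using assms(1) by (simp_all add: divide_pos_pos divide_neg_pos)
  have roots: "a * t\<^sup>2 + b * t + c = 0 \<longleftrightarrow>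
      t = (-b + sqrt D) / (2 * a) \<or> t = (-b - sqrt D) / (2 * a)" for t
    using assms(1) \<open>b\<^sup>2 < D\<close> unfolding D_def
    by (intro discriminant_nonneg) (auto intro: order_trans[OF zero_le_power2 less_imp_le])
  show ?thesis
    using pos neg roots by (metis less_asym)
qed

definition ratio_quadratic :: "real \<Rightarrow> real \<Rightarrow> real \<Rightarrow> real \<Rightarrow> real" where
  "ratio_quadratic r K \<mu> t = r * \<mu> * t\<^sup>2 + (r - r * \<mu> - K * r + K * \<mu>) * t - K * \<mu>"

definition equilibrium_of_ratio :: "real \<Rightarrow> real \<Rightarrow> real \<times> real" where
  "equilibrium_of_ratio \<mu> t = ((1 + \<mu> * (t - 1)) / (1 + t), t * (1 + \<mu> * (t - 1)) / (1 + t))"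

lemma f_w_ratio: "f_w \<mu> w (t * w) = w * (1 + \<mu> * (t - 1) - (1 + t) * w)"
  by (simp add: f_w_def algebra_simps)

lemma f_m_ratio:
  assumes "K \<noteq> 0" "(1 + t) * w = 1 + \<mu> * (t - 1)"
  shows "K * f_m r K \<mu> w (t * w) = - w * ratio_quadratic r K \<mu> t"
proof -
  have "K * f_m r K \<mu> w (t * w) = w * (r * t * (K - (1 + t) * w) + K * \<mu> * (1 - t))"
    using assms(1) by (simp add: f_m_def field_simps)
  also have "\<dots> = w * (r * t * (K - (1 + \<mu> * (t - 1))) + K * \<mu> * (1 - t))"
    by (simp only: assms(2))
  finally show ?thesis
    by (simp add: ratio_quadratic_def algebra_simps power2_eq_square)
qed

lemma equilibrium_determined_by_ratio:
  assumes "K > 0" "w > 0" "m > 0" "f_w \<mu> w m = 0" "f_m r K \<mu> w m = 0"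
  shows "ratio_quadratic r K \<mu> (m / w) = 0" "(w, m) = equilibrium_of_ratio \<mu> (m / w)"
proof -
  define t where "t = m / w"
  have m: "m = t * w" and "t > 0"
    using assms(2,3) by (simp_all add: t_def)
  have sum: "(1 + t) * w = 1 + \<mu> * (t - 1)"
    using assms(2,4) f_w_ratio[where w = w and t = t] by (simp add: m)
  show "ratio_quadratic r K \<mu> (m / w) = 0"
    using assms(1,2,5) f_m_ratio[OF _ sum, of K r] by (simp add: m flip: t_def)
  have "w = (1 + \<mu> * (t - 1)) / (1 + t)"
    using sum \<open>t > 0\<close> by (simp add: eq_divide_eq mult.commute)
  then show "(w, m) = equilibrium_of_ratio \<mu> (m / w)"
    unfolding t_def[symmetric] by (simp add: equilibrium_of_ratio_def m)
qed

lemma equilibrium_of_ratio_root: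
  assumes "0 < \<mu>" "\<mu> < 1" "\<mu> \<le> r" "K > 0" "t > 0" "ratio_quadratic r K \<mu> t = 0"
    and wm: "equilibrium_of_ratio \<mu> t = (w, m)"
  shows "w \<in> {0<..<1}" "m \<in> {0<..<K}" "f_w \<mu> w m = 0" "f_m r K \<mu> w m = 0"
proof -
  define S where "S = 1 + \<mu> * (t - 1)"
  have w: "w = S / (1 + t)" and m: "m = t * w"
    using wm by (auto simp: equilibrium_of_ratio_def S_def)
  have "\<mu> * t < t"
    using assms(2,5) by simp
  moreover have "0 < \<mu> * t"
    using assms(1,5) by simp
  ultimately have "0 < S" "S < 1 + t"
    using assms(1,2) by (simp_all add: S_def algebra_simps)
  then show "w \<in> {0<..<1}"
    using assms(5) by (simp add: w)
  have sum: "(1 + t) * w = S"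
    using assms(5) by (simp add: w)
  show "f_w \<mu> w m = 0"
    using f_w_ratio[where w = w and t = t] sum by (simp add: m S_def)
  have "K * f_m r K \<mu> w m = 0"
    using f_m_ratio[of K t w \<mu> r] assms(4,6) sum by (simp add: m S_def)
  then show "f_m r K \<mu> w m = 0"
    using assms(4) by simp
  \<comment> \<open>\<open>m < K\<close> because \<open>\<mu> (1 - t) < \<mu> \<le> r\<close>\<close>
  have "r * (1 + t) * m = r * t * S"
    by (simp add: m flip: sum)
  also have "\<dots> = r * t * K + K * \<mu> * (1 - t)"
    using assms(6) by (simp add: ratio_quadratic_def S_def algebra_simps power2_eq_square)
  also have "\<dots> < r * (1 + t) * K"
  proof -
    have "K * \<mu> \<le> K * r" "0 < K * (\<mu> * t)"
      using assms(1,3,4,5) by simp_all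
    then show ?thesis
      by (simp add: algebra_simps)
  qed
  finally have "m < K"
    using assms(1,3,5) by simp
  moreover have "m > 0"
    using \<open>w \<in> {0<..<1}\<close> assms(5) by (simp add: m)
  ultimately show "m \<in> {0<..<K}"
    by simp
qed

theorem mainTheorem18:
  fixes r K \<mu> :: real
  assumes "assumption1 r K \<mu>"
  shows "\<exists>!(w, m). w \<in> {0<..<1} \<and> m \<in> {0<..<K} \<and>
            f_w \<mu> w m = 0 \<and> f_m r K \<mu> w m = 0"
proof -
  have "1 < r" "0 < \<mu>" "0 < K" "\<mu> < 1 - K" "\<mu> < r / 2"
    using assms by (auto simp: assumption1_def)
  then have par: "0 < \<mu>" "\<mu> < 1" "\<mu> \<le> r" "K > 0"
    by linarith+
  have "\<exists>!t. t > 0 \<and> ratio_quadratic r K \<mu> t = 0"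
    using quadratic_unique_pos_root[of "r * \<mu>" "- K * \<mu>"] par
    by (simp add: ratio_quadratic_def)
  then obtain t where t: "t > 0" "ratio_quadratic r K \<mu> t = 0"
    and t_unique: "\<And>s. s > 0 \<Longrightarrow> ratio_quadratic r K \<mu> s = 0 \<Longrightarrow> s = t"
    by blast
  show ?thesis
  proof (intro ex1I[of _ "equilibrium_of_ratio \<mu> t"])
    show "case equilibrium_of_ratio \<mu> t of (w, m) \<Rightarrow> w \<in> {0<..<1} \<and> m \<in> {0<..<K} \<and>
        f_w \<mu> w m = 0 \<and> f_m r K \<mu> w m = 0"
      using equilibrium_of_ratio_root[OF par t] by (auto split: prod.split)
  next
    fix p
    assume "case p of (w, m) \<Rightarrow> w \<in> {0<..<1} \<and> m \<in> {0<..<K} \<and>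
        f_w \<mu> w m = 0 \<and> f_m r K \<mu> w m = 0"
    then obtain w m where "p = (w, m)" "w > 0" "m > 0" "f_w \<mu> w m = 0" "f_m r K \<mu> w m = 0"
      by (cases p) auto
    then show "p = equilibrium_of_ratio \<mu> t"
      using equilibrium_determined_by_ratio[OF par(4)] t_unique by (metis divide_pos_pos)
  qed
qed

end
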